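(* Let $n\ge2$, $d,p,K\ge1$, $P_1,\dots,P_n\in\mathbb{R}^{d\times p}$, $G_{ij}=P_i^TP_j$, and define $G^A=\frac1n\sum_iG_{ii}$, $G^T=\frac1{n^2}\sum_i\sum_jG_{ij}$, $G^D=G^A-G^T$. Let $\xi_X,\xi_Y\in\mathbb{R}^{p\times K}$, $X_i=P_i\xi_X$, $Y_i=P_i\xi_Y\in\mathbb{R}^{d\times K}$, let $X,Y\in\mathbb{R}^{nd\times K}$ stack the $X_i$ (resp. $Y_i$) vertically, let $\bar X,\bar Y$ be the projections of the columns of $X,Y$ onto the consensus subspace $\mathcal{C}=\{(z_1,\dots,z_n):z_1=\dots=z_n\in\mathbb{R}^d\}$ (i.e. each block replaced by the agent average $\frac1n\sum_iX_i$, resp. $\frac1n\sum_iY_i$), and $X_\perp=X-\bar X$, $Y_\perp=Y-\bar Y$. Then, for $\lambda_-\le\lambda_+$, the constraints $\bar X=\bar Y$, $(Y_\perp-\lambda_-X_\perp)^T(Y_\perp-\lambda_+X_\perp)\preceq0$, $X_\perp^TY_\perp=Y_\perp^TX_\perp$ are respectively equivalent to $$(\xi_X-\xi_Y)^TG^T(\xi_X-\xi_Y)=0,\qquad(\xi_Y-\lambda_-\xi_X)^TG^D(\xi_Y-\lambda_+\xi_X)\preceq0,\qquad \xi_Y^TG^D\xi_X-\xi_X^TG^D\xi_Y=0,$$ which do not involve $n$. *)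

theory Defs
  imports "HOL-Analysis.Analysis"
begin

text \<open>Agents are indexed by a finite type 'n (n = CARD('n)); vectors in R^d, R^p and
  the K columns are indexed by finite types 'd, 'p, 'k. A stacked matrix in R^{nd x K}
  has rows indexed by 'n \<times> 'd (block i, row r).\<close>

definition gram :: "('n \<Rightarrow> real^'p^'d) \<Rightarrow> 'n \<Rightarrow> 'n \<Rightarrow> real^'p^'p::finite" where
  "gram P i j = transpose (P i) ** P j"

definition gram_avg :: "('n::finite \<Rightarrow> real^'p^'d) \<Rightarrow> real^'p^'p::finite" where
  "gram_avg P = (1 / real CARD('n)) *\<^sub>R (\<Sum>i\<in>UNIV. gram P i i)"

definition gram_tot :: "('n::finite \<Rightarrow> real^'p^'d) \<Rightarrow> real^'p^'p::finite" where
  "gram_tot P = (1 / (real CARD('n))^2) *\<^sub>R (\<Sum>i\<in>UNIV. \<Sum>j\<in>UNIV. gram P i j)"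

definition gram_dis :: "('n::finite \<Rightarrow> real^'p^'d) \<Rightarrow> real^'p^'p::finite" where
  "gram_dis P = gram_avg P - gram_tot P"

definition stack :: "('n::finite \<Rightarrow> real^'k^'d::finite) \<Rightarrow> real^'k^('n \<times> 'd)" where
  "stack Z = (\<chi> ir. Z (fst ir) $ snd ir)"

definition consensus_proj :: "('n::finite \<Rightarrow> real^'k^'d) \<Rightarrow> real^'k^('n \<times> 'd)" where
  "consensus_proj Z = (\<chi> ir. ((1 / real CARD('n)) *\<^sub>R (\<Sum>j\<in>UNIV. Z j)) $ snd ir)"

definition neg_semidef :: "real^'k^'k \<Rightarrow> bool" where
  "neg_semidef M \<longleftrightarrow> (\<forall>x. x \<bullet> (M *v x) \<le> 0)"

end

theory Submission
  imports Defs
begin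

text \<open>Let \<open>M\<close> be the agent average of the \<open>P\<^sub>i\<close>. Every block of the consensus projection
  of \<open>X\<close> is \<open>M \<xi>\<^sub>X\<close>, and the blocks of \<open>X\<^sub>\<bottom>\<close> are \<open>(P\<^sub>i - M) \<xi>\<^sub>X\<close>; likewise for \<open>Y\<close>. So all
  products of stacked matrices factor through \<open>\<xi>\<^sub>X, \<xi>\<^sub>Y\<close>: \<open>G\<^sup>T = M\<^sup>T M\<close>, and the variance
  identity \<open>\<Sum>\<^sub>i (P\<^sub>i - M)\<^sup>T (P\<^sub>i - M) = n G\<^sup>D\<close> gives \<open>A\<^sub>\<bottom>\<^sup>T B\<^sub>\<bottom> = n \<xi>\<^sub>A\<^sup>T G\<^sup>D \<xi>\<^sub>B\<close>. The factor
  \<open>n > 0\<close> affects neither semidefiniteness nor vanishing, and \<open>M \<xi> = 0\<close> iff \<open>(M \<xi>)\<^sup>T (M \<xi>) = 0\<close>.\<close>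

lemma linear_matrix_mult_left: "linear (\<lambda>A::'a::real_algebra_1^'m^'n. A ** B)"
  by (rule linearI)
    (simp_all add: vec_eq_iff matrix_matrix_mult_def sum.distrib distrib_right scaleR_sum_right)

lemma linear_matrix_mult_right: "linear (\<lambda>B::'a::real_algebra_1^'k^'m. A ** B)"
  by (rule linearI)
    (simp_all add: vec_eq_iff matrix_matrix_mult_def sum.distrib distrib_left scaleR_sum_right)

lemma linear_transpose: "linear (transpose :: 'a::real_vector^'m^'n \<Rightarrow> 'a^'n^'m)"
  by (rule linearI) (simp_all add: vec_eq_iff transpose_def)

lemmas matrix_mult_sum_left = linear_sum[OF linear_matrix_mult_left]
lemmas matrix_mult_sum_right = linear_sum[OF linear_matrix_mult_right]
lemmas matrix_mult_diff_left = linear_diff[OF linear_matrix_mult_left]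
lemmas matrix_mult_diff_right = linear_diff[OF linear_matrix_mult_right]
lemmas matrix_mult_scaleR_left = linear_scale[OF linear_matrix_mult_left]
lemmas matrix_mult_scaleR_right = linear_scale[OF linear_matrix_mult_right]
lemmas transpose_sum = linear_sum[OF linear_transpose]
lemmas transpose_diff = linear_diff[OF linear_transpose]

lemma transpose_mult_self_eq_0_iff:
  fixes M :: "'a::linordered_idom^'k^'m"
  shows "transpose M ** M = 0 \<longleftrightarrow> M = 0"
proof
  assume "transpose M ** M = 0"
  then have "(\<Sum>r\<in>UNIV. M $ r $ c * M $ r $ c) = 0" for c
    by (auto simp: vec_eq_iff matrix_matrix_mult_def transpose_def)
  then have "M $ r $ c * M $ r $ c = 0" for r c
    by (simp add: sum_nonneg_eq_0_iff)
  then show "M = 0"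
    by (simp add: vec_eq_iff)
qed simp

lemma neg_semidef_scaleR_iff:
  assumes "c > 0"
  shows "neg_semidef (c *\<^sub>R M) \<longleftrightarrow> neg_semidef M"
  using assms by (simp add: neg_semidef_def scaleR_matrix_vector_assoc[symmetric] mult_le_0_iff)

lemma stack_diff: "stack Z - stack W = stack (\<lambda>i. Z i - W i)"
  by (simp add: vec_eq_iff stack_def)

lemma stack_scaleR: "c *\<^sub>R stack Z = stack (\<lambda>i. c *\<^sub>R Z i)"
  by (simp add: vec_eq_iff stack_def)

lemma stack_const_eq_iff: "stack (\<lambda>_. A) = stack (\<lambda>_. B) \<longleftrightarrow> A = B"
  by (auto simp: vec_eq_iff stack_def)

lemma transpose_stack_mult_stack:
  fixes Z :: "'n::finite \<Rightarrow> real^'k^'d::finite" and W :: "'n \<Rightarrow> real^'l^'d"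
  shows "transpose (stack Z) ** stack W = (\<Sum>i\<in>UNIV. transpose (Z i) ** W i)"
proof -
  have "(UNIV :: ('n \<times> 'd) set) = UNIV \<times> UNIV" by simp
  then show ?thesis
    by (simp add: vec_eq_iff matrix_matrix_mult_def stack_def transpose_def
        sum.cartesian_product case_prod_beta)
qed

definition agent_mean :: "('n::finite \<Rightarrow> real^'b^'a) \<Rightarrow> real^'b^'a" where
  "agent_mean Z = (1 / real CARD('n)) *\<^sub>R (\<Sum>i\<in>UNIV. Z i)"

lemma sum_eq_card_scaleR_agent_mean:
  "(\<Sum>i\<in>UNIV. Z i) = real CARD('n) *\<^sub>R agent_mean (Z :: 'n::finite \<Rightarrow> real^'b^'a)"
  by (simp add: agent_mean_def)

lemma agent_mean_mult_right: "agent_mean (\<lambda>i. P i ** A) = agent_mean P ** A"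
  by (simp add: agent_mean_def matrix_mult_sum_left matrix_mult_scaleR_left)

lemma consensus_proj_eq_stack_agent_mean: "consensus_proj Z = stack (\<lambda>_. agent_mean Z)"
  by (simp add: vec_eq_iff stack_def consensus_proj_def agent_mean_def)

lemma consensus_proj_mult_right: "consensus_proj (\<lambda>i. P i ** A) = stack (\<lambda>_. agent_mean P ** A)"
  by (simp add: consensus_proj_eq_stack_agent_mean agent_mean_mult_right)

lemma disagreement_mult_right:
  "stack (\<lambda>i. P i ** A) - consensus_proj (\<lambda>i. P i ** A) = stack (\<lambda>i. (P i - agent_mean P) ** A)"
  by (simp add: consensus_proj_mult_right stack_diff matrix_mult_diff_left)

lemma gram_tot_eq_agent_mean: "gram_tot P = transpose (agent_mean P) ** agent_mean P"
proof -
  have "(\<Sum>i\<in>UNIV. \<Sum>j\<in>UNIV. gram P i j) = transpose (\<Sum>i\<in>UNIV. P i) ** (\<Sum>j\<in>UNIV. P j)"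
    by (simp add: gram_def transpose_sum matrix_mult_sum_left matrix_mult_sum_right)
      (rule sum.swap)
  then show ?thesis
    by (simp add: gram_tot_def sum_eq_card_scaleR_agent_mean transpose_scalar
        matrix_mult_scaleR_left matrix_mult_scaleR_right power2_eq_square)
qed

lemma sum_centered_gram:
  fixes P :: "'n::finite \<Rightarrow> real^'p::finite^'d::finite"
  shows "(\<Sum>i\<in>UNIV. transpose (P i - agent_mean P) ** (P i - agent_mean P))
       = real CARD('n) *\<^sub>R gram_dis P"
proof -
  let ?n = "real CARD('n)" and ?M = "agent_mean P"
  have "(\<Sum>i\<in>UNIV. transpose (P i - ?M) ** (P i - ?M))
      = (\<Sum>i\<in>UNIV. transpose (P i) ** P i) - transpose (\<Sum>i\<in>UNIV. P i) ** ?M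
        - (transpose ?M ** (\<Sum>i\<in>UNIV. P i) - ?n *\<^sub>R (transpose ?M ** ?M))"
    by (simp add: transpose_diff matrix_mult_diff_left matrix_mult_diff_right sum_subtractf
        transpose_sum matrix_mult_sum_left matrix_mult_sum_right sum_constant_scaleR
        del: sum_constant)
  also have "\<dots> = (\<Sum>i\<in>UNIV. transpose (P i) ** P i) - ?n *\<^sub>R (transpose ?M ** ?M)"
    by (simp add: sum_eq_card_scaleR_agent_mean transpose_scalar matrix_mult_scaleR_left
        matrix_mult_scaleR_right)
  also have "\<dots> = ?n *\<^sub>R gram_dis P"
    by (simp add: gram_dis_def gram_avg_def gram_tot_eq_agent_mean gram_def scaleR_diff_right)
  finally show ?thesis .
qed

lemma transpose_disagreement_mult_disagreement:
  fixes P :: "'n::finite \<Rightarrow> real^'p::finite^'d::finite"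
  shows "transpose (stack (\<lambda>i. (P i - agent_mean P) ** A)) ** stack (\<lambda>i. (P i - agent_mean P) ** B)
       = real CARD('n) *\<^sub>R (transpose A ** gram_dis P ** B)"
proof -
  have "transpose (stack (\<lambda>i. (P i - agent_mean P) ** A)) ** stack (\<lambda>i. (P i - agent_mean P) ** B)
      = transpose A ** (\<Sum>i\<in>UNIV. transpose (P i - agent_mean P) ** (P i - agent_mean P)) ** B"
    by (simp add: transpose_stack_mult_stack matrix_transpose_mul matrix_mul_assoc
        matrix_mult_sum_left matrix_mult_sum_right)
  then show ?thesis
    by (simp add: sum_centered_gram matrix_mult_scaleR_left matrix_mult_scaleR_right)
qed

lemma consensus_proj_eq_iff_gram_tot:
  fixes P :: "'n::finite \<Rightarrow> real^'p::finite^'d::finite"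
  shows "consensus_proj (\<lambda>i. P i ** A) = consensus_proj (\<lambda>i. P i ** B)
     \<longleftrightarrow> transpose (A - B) ** gram_tot P ** (A - B) = 0"
proof -
  have "consensus_proj (\<lambda>i. P i ** A) = consensus_proj (\<lambda>i. P i ** B)
      \<longleftrightarrow> agent_mean P ** (A - B) = 0"
    by (simp add: consensus_proj_mult_right stack_const_eq_iff matrix_mult_diff_right)
  also have "\<dots> \<longleftrightarrow> transpose (agent_mean P ** (A - B)) ** (agent_mean P ** (A - B)) = 0"
    by (rule transpose_mult_self_eq_0_iff[symmetric])
  finally show ?thesis
    by (simp add: gram_tot_eq_agent_mean matrix_transpose_mul matrix_mul_assoc)
qed

theorem proposition9:
  fixes P :: "'n::finite \<Rightarrow> real^'p::finite^'d::finite"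
    and \<xi>X \<xi>Y :: "real^'k::finite^'p"
    and lm lp :: real
  assumes "CARD('n) \<ge> 2"
    and "lm \<le> lp"
  defines "Xb \<equiv> (\<lambda>i. P i ** \<xi>X)" and "Yb \<equiv> (\<lambda>i. P i ** \<xi>Y)"
  defines "Xperp \<equiv> stack Xb - consensus_proj Xb"
    and "Yperp \<equiv> stack Yb - consensus_proj Yb"
  shows "(consensus_proj Xb = consensus_proj Yb \<longleftrightarrow>
            transpose (\<xi>X - \<xi>Y) ** gram_tot P ** (\<xi>X - \<xi>Y) = 0)
       \<and> (neg_semidef (transpose (Yperp - lm *\<^sub>R Xperp) ** (Yperp - lp *\<^sub>R Xperp)) \<longleftrightarrow>
            neg_semidef (transpose (\<xi>Y - lm *\<^sub>R \<xi>X) ** gram_dis P ** (\<xi>Y - lp *\<^sub>R \<xi>X)))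
       \<and> (transpose Xperp ** Yperp = transpose Yperp ** Xperp \<longleftrightarrow>
            transpose \<xi>Y ** gram_dis P ** \<xi>X - transpose \<xi>X ** gram_dis P ** \<xi>Y = 0)"
proof -
  let ?D = "\<lambda>i. P i - agent_mean P"
  have n_pos: "real CARD('n) > 0" by simp
  have Xperp: "Xperp = stack (\<lambda>i. ?D i ** \<xi>X)" and Yperp: "Yperp = stack (\<lambda>i. ?D i ** \<xi>Y)"
    unfolding Xperp_def Yperp_def Xb_def Yb_def by (simp_all only: disagreement_mult_right)
  have combination: "Yperp - c *\<^sub>R Xperp = stack (\<lambda>i. ?D i ** (\<xi>Y - c *\<^sub>R \<xi>X))" for c
    by (simp add: Xperp Yperp stack_scaleR stack_diff matrix_mult_diff_right
        matrix_mult_scaleR_right)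
  show ?thesis
    unfolding Xb_def Yb_def consensus_proj_eq_iff_gram_tot combination
    using n_pos
    by (simp add: Xperp Yperp transpose_disagreement_mult_disagreement neg_semidef_scaleR_iff
        eq_commute[of "transpose \<xi>Y ** gram_dis P ** \<xi>X"])
qed

end
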